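(* Let $(X_1,Y_1),\dots,(X_k,Y_k)$ be i.i.d. random vectors in $\mathbb R^2$ whose common density $f$ satisfies $f\in L_\infty(\mathbb R^2)$, $\|f\|_{L_\infty(\mathbb R^2)}\le C_0$, and $f=0$ outside the disk $B((0,0),R)$, where $R,C_0>0$. For $(x,y)\in B((0,0),R)$ let $Z(x,y)=\min_{1\le j\le k}\sqrt{(X_j-x)^2+(Y_j-y)^2}$. Then $$\min_{(x,y)\in B((0,0),R)}\mathbf E\big(Z(x,y)\big)\ge\frac{1}{4\pi RC_0(k+1)}.$$
   Context: $B((0,0),R)$ denotes the closed Euclidean disk of radius $R$ centered at the origin. *)

theory Defs
  imports "HOL-Probability.Probability"
begin

end

theory Submission
  imports Defs
begin

text \<open>Each point falls into the disk of radius \<open>t\<close> around \<open>p\<close> with probability at most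
  \<open>C\<^sub>0 \<pi> t\<^sup>2\<close>, so by the union bound \<open>P(Z < t) \<le> k C\<^sub>0 \<pi> t\<^sup>2\<close>. Since the density has total mass 1 on a disk of
  radius \<open>R\<close>, \<open>C\<^sub>0 \<pi> R\<^sup>2 \<ge> 1\<close>, so for \<open>t = 1 / (2 \<pi> C\<^sub>0 R (k + 1))\<close> this probability is at
  most \<open>1/2\<close>, and Markov's inequality gives \<open>E Z \<ge> t P(Z \<ge> t) \<ge> t / 2\<close>.\<close>

lemma (in prob_space) prob_distributed_cball_le:
  fixes g :: "'a \<Rightarrow> real \<times> real"
  assumes "distributed M lborel g (\<lambda>z. ennreal (f z))"
    and "AE z in lborel. f z \<le> C" and "C \<ge> 0" and "r \<ge> 0"
  shows "prob (g -` cball c r \<inter> space M) \<le> C * pi * r\<^sup>2"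
proof -
  have "emeasure M (g -` cball c r \<inter> space M) = (\<integral>\<^sup>+z. ennreal (f z) * indicator (cball c r) z \<partial>lborel)"
    using distributed_emeasure[OF assms(1)] by simp
  also have "\<dots> \<le> (\<integral>\<^sup>+z. ennreal C * indicator (cball c r) z \<partial>lborel)"
    using assms(2) by (intro nn_integral_mono_AE) (auto simp: indicator_def intro: ennreal_leI)
  also have "\<dots> = ennreal C * emeasure lborel (cball c r)"
    by (rule nn_integral_cmult_indicator) simp
  also have "emeasure lborel (cball c r) = ennreal (pi * r\<^sup>2)"
    using emeasure_cball[OF \<open>r \<ge> 0\<close>, of c] unit_ball_vol_2 by (simp add: power2_eq_square)
  finally show ?thesis
    using \<open>C \<ge> 0\<close> by (simp add: emeasure_eq_measure ennreal_mult'[symmetric] mult.assoc)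
qed

lemma (in prob_space) distributed_AE_in_support:
  assumes "distributed M lborel g (\<lambda>z. ennreal (f z))"
    and "\<And>z. z \<notin> S \<Longrightarrow> f z = 0" and "S \<in> sets borel"
  shows "AE \<omega> in M. g \<omega> \<in> S"
proof (subst distributed_AE2[OF assms(1)])
  show "AE z in lborel. 0 < ennreal (f z) \<longrightarrow> z \<in> S"
    using assms(2) by (intro AE_I2) force
qed (use assms(3) in simp)

lemma (in prob_space) density_bounded_on_cball_mass:
  fixes g :: "'a \<Rightarrow> real \<times> real"
  assumes "distributed M lborel g (\<lambda>z. ennreal (f z))"
    and "AE z in lborel. f z \<le> C" and "C \<ge> 0" and "R \<ge> 0"
    and "\<And>z. z \<notin> cball c R \<Longrightarrow> f z = 0"
  shows "1 \<le> C * pi * R\<^sup>2"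
proof -
  have "g \<in> measurable M borel"
    using distributed_measurable[OF assms(1)] by simp
  then have "g -` cball c R \<inter> space M \<in> events"
    by (rule measurable_sets) simp
  moreover have "AE \<omega> in M. \<omega> \<in> g -` cball c R \<inter> space M"
    using distributed_AE_in_support[OF assms(1), of "cball c R"] assms(5) by simp
  ultimately have "prob (g -` cball c R \<inter> space M) = 1"
    by (simp add: prob_eq_1)
  then show ?thesis
    using prob_distributed_cball_le[OF assms(1-4), of c] by simp
qed

lemma (in prob_space) prob_Min_dist_less_le:
  fixes g :: "'i \<Rightarrow> 'a \<Rightarrow> real \<times> real" and C t :: real
  assumes "finite J" and "J \<noteq> {}"
    and "\<And>j. j \<in> J \<Longrightarrow> distributed M lborel (g j) (\<lambda>z. ennreal (f z))"
    and "AE z in lborel. f z \<le> C" and "C \<ge> 0" and "t \<ge> 0"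
  shows "prob {\<omega> \<in> space M. Min ((\<lambda>j. dist (g j \<omega>) p) ` J) < t} \<le> real (card J) * C * pi * t\<^sup>2"
proof -
  define B where "B j = g j -` cball p t \<inter> space M" for j
  have B_events: "B j \<in> events" if "j \<in> J" for j
    using distributed_measurable[OF assms(3)[OF that]] unfolding B_def
    by (intro measurable_sets[where A = borel]) auto
  have "{\<omega> \<in> space M. Min ((\<lambda>j. dist (g j \<omega>) p) ` J) < t} \<subseteq> (\<Union>j\<in>J. B j)"
    using assms(1,2) by (auto simp: Min_less_iff B_def dist_commute)
  then have "prob {\<omega> \<in> space M. Min ((\<lambda>j. dist (g j \<omega>) p) ` J) < t} \<le> prob (\<Union>j\<in>J. B j)"
    using B_events assms(1) by (intro finite_measure_mono) auto
  also have "\<dots> \<le> (\<Sum>j\<in>J. prob (B j))"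
    using B_events by (intro finite_measure_subadditive_finite[OF assms(1)]) auto
  also have "\<dots> \<le> (\<Sum>j\<in>J. C * pi * t\<^sup>2)"
    unfolding B_def using assms(3-6) by (intro sum_mono prob_distributed_cball_le) auto
  finally show ?thesis by simp
qed

lemma (in prob_space) expectation_ge_threshold:
  fixes Z :: "'a \<Rightarrow> real"
  assumes "integrable M Z" and "AE \<omega> in M. 0 \<le> Z \<omega>" and "t > 0"
  shows "t * (1 - prob {\<omega> \<in> space M. Z \<omega> < t}) \<le> expectation Z"
proof -
  have [measurable]: "Z \<in> borel_measurable M"
    using assms(1) by (rule borel_measurable_integrable)
  have "1 - prob {\<omega> \<in> space M. Z \<omega> < t} = prob {\<omega> \<in> space M. t \<le> Z \<omega>}"
    by (subst prob_compl[symmetric]) (auto intro: arg_cong[where f = prob])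
  also have "\<dots> \<le> expectation Z / t"
    using assms by (intro integral_Markov_inequality_measure[where A = "space M"]) auto
  finally show ?thesis
    using \<open>t > 0\<close> by (simp add: field_simps)
qed

lemma (in prob_space) integrable_Min_dist:
  fixes g :: "'i \<Rightarrow> 'a \<Rightarrow> real \<times> real"
  assumes "finite J" and "j\<^sub>0 \<in> J" and "\<And>j. j \<in> J \<Longrightarrow> g j \<in> borel_measurable M"
    and "AE \<omega> in M. g j\<^sub>0 \<omega> \<in> cball c R" and "p \<in> cball c R"
  shows "integrable M (\<lambda>\<omega>. Min ((\<lambda>j. dist (g j \<omega>) p) ` J))"
proof (rule integrable_const_bound)
  show "AE \<omega> in M. norm (Min ((\<lambda>j. dist (g j \<omega>) p) ` J)) \<le> 2 * R"
    using assms(4)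
  proof eventually_elim
    case (elim \<omega>)
    have "Min ((\<lambda>j. dist (g j \<omega>) p) ` J) \<le> dist (g j\<^sub>0 \<omega>) p"
      using assms(1,2) by (intro Min_le) auto
    also have "\<dots> \<le> dist c (g j\<^sub>0 \<omega>) + dist c p"
      by (rule dist_triangle3)
    moreover have "0 \<le> Min ((\<lambda>j. dist (g j \<omega>) p) ` J)"
      using assms(1,2) by (subst Min_ge_iff) auto
    ultimately show ?case
      using elim assms(5) by simp
  qed
  show "(\<lambda>\<omega>. Min ((\<lambda>j. dist (g j \<omega>) p) ` J)) \<in> borel_measurable M"
    using assms(1,3) by (intro borel_measurable_Min) auto
qed

lemma half_bound_at_threshold:
  fixes a R :: real and k :: nat
  assumes "1 \<le> a * R\<^sup>2"
  shows "real k * a * (1 / (2 * a * R * (real k + 1)))\<^sup>2 \<le> 1 / 2"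
proof -
  have "a > 0"
    using assms mult_nonpos_nonneg[of a "R\<^sup>2"] by fastforce
  have "real k * a * (1 / (2 * a * R * (real k + 1)))\<^sup>2 = real k / (4 * (a * R\<^sup>2) * (real k + 1)\<^sup>2)"
    using assms \<open>a > 0\<close> by (auto simp: power2_eq_square)
  also have "\<dots> \<le> real k / (4 * (real k + 1)\<^sup>2)"
    using assms \<open>a > 0\<close> by (intro divide_left_mono mult_right_mono mult_pos_pos) auto
  also have "\<dots> \<le> 1 / 2"
    by (simp add: divide_le_eq power2_eq_square algebra_simps)
  finally show ?thesis .
qed

lemma (in prob_space) expectation_Min_dist_ge:
  fixes g :: "'i \<Rightarrow> 'a \<Rightarrow> real \<times> real" and C R :: real
  assumes "finite J" and "J \<noteq> {}"
    and D: "\<And>j. j \<in> J \<Longrightarrow> distributed M lborel (g j) (\<lambda>z. ennreal (f z))"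
    and "AE z in lborel. f z \<le> C" and "C > 0" and "R > 0"
    and "\<And>z. z \<notin> cball c R \<Longrightarrow> f z = 0" and "p \<in> cball c R"
  shows "1 / (4 * pi * R * C * (real (card J) + 1)) \<le> expectation (\<lambda>\<omega>. Min ((\<lambda>j. dist (g j \<omega>) p) ` J))"
proof -
  define Z where "Z \<omega> = Min ((\<lambda>j. dist (g j \<omega>) p) ` J)" for \<omega>
  define t where "t = 1 / (2 * (C * pi) * R * (real (card J) + 1))"
  obtain j\<^sub>0 where "j\<^sub>0 \<in> J"
    using \<open>J \<noteq> {}\<close> by blast
  have "t > 0"
    using assms(5,6) by (simp add: t_def)
  have mass: "1 \<le> C * pi * R\<^sup>2"
    using assms(5-7) by (intro density_bounded_on_cball_mass[OF D[OF \<open>j\<^sub>0 \<in> J\<close>] assms(4)]) auto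
  have "AE \<omega> in M. g j\<^sub>0 \<omega> \<in> cball c R"
    using assms(7) by (intro distributed_AE_in_support[OF D[OF \<open>j\<^sub>0 \<in> J\<close>]]) auto
  then have "integrable M Z"
    unfolding Z_def using \<open>j\<^sub>0 \<in> J\<close> assms(1,8) distributed_measurable[OF D]
    by (intro integrable_Min_dist[where g = g]) auto
  moreover have "AE \<omega> in M. 0 \<le> Z \<omega>"
    using assms(1,2) by (intro AE_I2) (simp add: Z_def Min_ge_iff)
  moreover have small: "prob {\<omega> \<in> space M. Z \<omega> < t} \<le> 1 / 2"
  proof -
    have "prob {\<omega> \<in> space M. Z \<omega> < t} \<le> real (card J) * (C * pi) * t\<^sup>2"
      unfolding Z_def using prob_Min_dist_less_le[OF assms(1,2) D assms(4)] assms(5) \<open>t > 0\<close>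
      by (simp add: mult.assoc)
    also have "\<dots> \<le> 1 / 2"
      unfolding t_def using mass by (intro half_bound_at_threshold) (simp add: mult.assoc)
    finally show ?thesis .
  qed
  ultimately have "t * (1 - prob {\<omega> \<in> space M. Z \<omega> < t}) \<le> expectation Z"
    using expectation_ge_threshold \<open>t > 0\<close> by blast
  moreover have "t * (1 / 2) \<le> t * (1 - prob {\<omega> \<in> space M. Z \<omega> < t})"
    using small \<open>t > 0\<close> by (intro mult_left_mono) auto
  ultimately show ?thesis
    unfolding Z_def t_def by (simp add: field_simps)
qed

theorem mainTheorem13:
  fixes M :: "'a measure"
    and X Y :: "nat \<Rightarrow> 'a \<Rightarrow> real"
    and f :: "real \<times> real \<Rightarrow> real"
    and k :: nat and R C\<^sub>0 :: real
  assumes "prob_space M"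
    and "k \<ge> 1"
    and "R > 0" and "C\<^sub>0 > 0"
    and "f \<in> borel_measurable lborel"
    and "\<And>z. f z \<ge> 0"
    and "AE z in lborel. f z \<le> C\<^sub>0"
    and "\<And>z. z \<notin> cball (0::real \<times> real) R \<Longrightarrow> f z = 0"
    and "\<And>j. j \<in> {1..k} \<Longrightarrow>
           distributed M lborel (\<lambda>\<omega>. (X j \<omega>, Y j \<omega>)) (\<lambda>z. ennreal (f z))"
    and "prob_space.indep_vars M (\<lambda>_. borel) (\<lambda>j \<omega>. (X j \<omega>, Y j \<omega>)) {1..k}"
  shows "\<forall>p \<in> cball (0::real \<times> real) R.
           prob_space.expectation M
             (\<lambda>\<omega>. Min ((\<lambda>j. dist (X j \<omega>, Y j \<omega>) p) ` {1..k}))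
           \<ge> 1 / (4 * pi * R * C\<^sub>0 * (real k + 1))"
proof
  interpret prob_space M by fact
  fix p :: "real \<times> real" assume "p \<in> cball 0 R"
  have "card {1..k} = k" "{1..k} \<noteq> {}"
    using \<open>k \<ge> 1\<close> by auto
  then show "expectation (\<lambda>\<omega>. Min ((\<lambda>j. dist (X j \<omega>, Y j \<omega>) p) ` {1..k}))
      \<ge> 1 / (4 * pi * R * C\<^sub>0 * (real k + 1))"
    using expectation_Min_dist_ge[where g = "\<lambda>j \<omega>. (X j \<omega>, Y j \<omega>)" and J = "{1..k}",
        OF _ _ assms(9) assms(7,4,3,8) \<open>p \<in> cball 0 R\<close>] by simp
qed

end
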